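(* Let $M\ge 2$ and let $\varphi_1,\dots,\varphi_M$ be i.i.d. $\mathcal{N}(\nu,\sigma_\varphi^2)$ with $\sigma_\varphi>0$. Let $\bar\varphi=\frac1M\sum_k\varphi_k$, $\hat\sigma_\varphi^2=\frac{1}{M-1}\sum_{k=1}^M(\varphi_k-\bar\varphi)^2$, $\hat\sigma_\varphi=\sqrt{\hat\sigma_\varphi^2}$. Fix $\alpha,\gamma\in(0,1)$ and $\varphi_{MAP}\in\mathbb{R}$, let $z_{1-\gamma/2}$ be the $(1-\gamma/2)$-quantile of the standard normal distribution, let $\chi^2_{M-1,p}$ denote the $p$-quantile of the chi-squared distribution with $M-1$ degrees of freedom, and set $L=\sqrt{(M-1)/\chi^2_{M-1,1-\alpha/2}}$, $R=\sqrt{(M-1)/\chi^2_{M-1,\alpha/2}}$. Define the credible interval endpoints $\underline{\varphi}^*=\varphi_{MAP}-z_{1-\gamma/2}\sigma_\varphi$, $\overline{\varphi}^*=\varphi_{MAP}+z_{1-\gamma/2}\sigma_\varphi$, and the random intervals $\underline{I}=[\varphi_{MAP}-z_{1-\gamma/2}\hat\sigma_\varphi R,\ \varphi_{MAP}-z_{1-\gamma/2}\hat\sigma_\varphi L]$, $\overline{I}=[\varphi_{MAP}+z_{1-\gamma/2}\hat\sigma_\varphi L,\ \varphi_{MAP}+z_{1-\gamma/2}\hat\sigma_\varphi R]$. Then $$\mathbb{P}\{\underline{\varphi}^*\in\underline{I}\text{ and }\overline{\varphi}^*\in\overline{I}\}=1-\alpha.$$ Moreover, $\mathbb{P}\{[\varphi_{MAP}-z_{1-\gamma/2}\hat\sigma_\varphi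 R,\ \varphi_{MAP}+z_{1-\gamma/2}\hat\sigma_\varphi R]\supset[\underline{\varphi}^*,\overline{\varphi}^*]\}=1-\alpha/2$ and $\mathbb{P}\{[\varphi_{MAP}-z_{1-\gamma/2}\hat\sigma_\varphi L,\ \varphi_{MAP}+z_{1-\gamma/2}\hat\sigma_\varphi L]\subset[\underline{\varphi}^*,\overline{\varphi}^*]\}=1-\alpha/2$.
   Context: In the application, $\varphi_k=\mathbf{h}^\top\mathbf{c}^k_{MAP}$ are values of a linear functional on i.i.d. Gaussian Monte Carlo MAP estimators, $\sigma_\varphi^2=\mathbf{h}^\top\bm{\Sigma}\mathbf{h}$ is the posterior variance of the functional, and $[\underline{\varphi}^*,\overline{\varphi}^*]$ is the Gaussian $(1-\gamma)\times100\%$ Bayesian credible interval for the functional; $L$ and $R$ are called the deflation and inflation factors. *)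

theory Defs
  imports "HOL-Probability.Probability"
begin

definition chi2_density :: "nat \<Rightarrow> real \<Rightarrow> real" where
  "chi2_density k x = (if x > 0 then
      x powr (real k / 2 - 1) * exp (- x / 2) / (2 powr (real k / 2) * Gamma (real k / 2))
    else 0)"

definition chi2_distr :: "nat \<Rightarrow> real measure" where
  "chi2_distr k = density lborel (\<lambda>x. ennreal (chi2_density k x))"

definition chi2_quantile :: "nat \<Rightarrow> real \<Rightarrow> real" where
  "chi2_quantile k p = (THE x. x > 0 \<and> cdf (chi2_distr k) x = p)"

definition std_normal_quantile :: "real \<Rightarrow> real" where
  "std_normal_quantile p =
     (THE z. cdf (density lborel (\<lambda>x. ennreal (std_normal_density x))) z = p)"

end

theory Submission
  imports Defs
begin

text \<open>Let \<open>S\<close> be the sum of squared deviations of the \<open>\<phi>\<^sub>k\<close> from their mean and \<open>T = S / \<sigma>\<^sup>2\<close>, so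
  that \<open>shat = \<sigma> sqrt (T / (M - 1))\<close>, and let \<open>q\<^sub>1\<close>, \<open>q\<^sub>2\<close> be the \<open>\<alpha>/2\<close>- and \<open>(1 - \<alpha>/2)\<close>-quantiles of
  \<open>\<chi>\<^sup>2(M - 1)\<close>. Then \<open>\<sigma> \<le> shat R\<close> iff \<open>q\<^sub>1 \<le> T\<close>, and \<open>shat L \<le> \<sigma>\<close> iff \<open>T \<le> q\<^sub>2\<close>, so the three events
  are \<open>q\<^sub>1 \<le> T \<le> q\<^sub>2\<close>, \<open>q\<^sub>1 \<le> T\<close> and \<open>T \<le> q\<^sub>2\<close>, and everything reduces to the classical fact that
  \<open>T\<close> has law \<open>\<chi>\<^sup>2(M - 1)\<close>.

  That fact is proved by induction on the sample size, integrating out one sample at a time.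
  Adding a sample \<open>b\<close> to \<open>n\<close> samples with mean \<open>a\<close> replaces the mean by \<open>(n a + b)/(n + 1)\<close> and
  adds \<open>n/(n + 1) (b - a)\<^sup>2\<close> to \<open>S\<close>. As \<open>a \<sim> N(\<nu>, \<sigma>\<^sup>2/n)\<close> and \<open>b \<sim> N(\<nu>, \<sigma>\<^sup>2)\<close> are independent, the new
  mean and \<open>sqrt (n/(n + 1)) (b - a)/\<sigma>\<close> are independent with laws \<open>N(\<nu>, \<sigma>\<^sup>2/(n + 1))\<close> and
  \<open>N(0, 1)\<close>; the square of the latter has law \<open>\<chi>\<^sup>2(1)\<close>, and \<open>\<chi>\<^sup>2(k) * \<chi>\<^sup>2(1) = \<chi>\<^sup>2(k + 1)\<close> by a
  Beta integral.\<close>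

section \<open>Chi-squared densities\<close>

lemma chi2_density_nonneg [simp]: "0 \<le> chi2_density k x"
  unfolding chi2_density_def
  by (cases "k = 0") (auto intro!: divide_nonneg_pos Gamma_real_pos)

lemma chi2_density_pos: "k \<ge> 1 \<Longrightarrow> x > 0 \<Longrightarrow> 0 < chi2_density k x"
  unfolding chi2_density_def by (auto intro!: divide_pos_pos mult_pos_pos Gamma_real_pos)

lemma borel_measurable_chi2_density [measurable]: "chi2_density k \<in> borel_measurable borel"
  unfolding chi2_density_def[abs_def] by measurable

lemma sets_chi2_distr [simp, measurable_cong]: "sets (chi2_distr k) = sets borel"
  by (simp add: chi2_distr_def)

lemma space_chi2_distr [simp]: "space (chi2_distr k) = UNIV"
  by (simp add: chi2_distr_def)

lemma prob_space_chi2_distr: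
  assumes "k \<ge> 1"
  shows "prob_space (chi2_distr k)"
proof
  define a where "a = real k / 2"
  have a: "a > 0" using assms by (simp add: a_def)
  have "emeasure (chi2_distr k) UNIV = (\<integral>\<^sup>+x. ennreal (chi2_density k x) \<partial>lborel)"
    by (simp add: chi2_distr_def emeasure_density)
  also have "\<dots> = (\<integral>\<^sup>+t. ennreal (2 * chi2_density k (2 * t)) \<partial>lborel)"
    using nn_integral_real_affine[of "\<lambda>x. ennreal (chi2_density k x)" 2 0]
    by (simp add: ennreal_mult nn_integral_cmult)
  also have "\<dots> = (\<integral>\<^sup>+t. ennreal (1 / Gamma a) *
      ennreal (indicator {0..} t * t powr (a - 1) / exp t) \<partial>lborel)"
  proof (intro nn_integral_cong)
    fix t :: real
    have "2 * chi2_density k (2 * t) = 1 / Gamma a * (indicator {0..} t * t powr (a - 1) / exp t)"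
      using a Gamma_real_pos[OF a] unfolding chi2_density_def a_def[symmetric]
      by (cases "t > 0") (auto simp: powr_mult powr_diff exp_minus indicator_def field_simps)
    then show "ennreal (2 * chi2_density k (2 * t)) =
        ennreal (1 / Gamma a) * ennreal (indicator {0..} t * t powr (a - 1) / exp t)"
      using Gamma_real_pos[OF a] by (simp flip: ennreal_mult')
  qed
  also have "\<dots> = ennreal (1 / Gamma a) * ennreal (Gamma a)"
    using a by (simp add: nn_integral_cmult Gamma_conv_nn_integral_real)
  finally show "emeasure (chi2_distr k) (space (chi2_distr k)) = 1"
    using Gamma_real_pos[OF a] by (simp flip: ennreal_mult')
qed

lemma nn_integral_Beta:
  assumes "a > 0" "b > (0::real)"
  shows "(\<integral>\<^sup>+t. ennreal (t powr (a - 1) * (1 - t) powr (b - 1)) * indicator {0<..<1} t \<partial>lborel)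
     = ennreal (Beta a b)"
proof -
  have "((\<lambda>t. t powr (a - 1) * (1 - t) powr (b - 1)) has_integral Beta a b) {0<..<1}"
    using has_integral_Beta_real[OF assms] by (simp add: has_integral_Icc_iff_Ioo)
  then show ?thesis
    by (intro nn_integral_has_integral_lebesgue') auto
qed

lemma chi2_density_mult_scaled:
  assumes "k \<ge> 1" "x > 0" "0 < t" "t < 1"
  shows "chi2_density k (x * t) * chi2_density 1 (x - x * t) =
    chi2_density (Suc k) x / (x * Beta (real k / 2) (1/2)) *
      (t powr (real k / 2 - 1) * (1 - t) powr (1/2 - 1))"
proof -
  define a where "a = real k / 2"
  have a: "a > 0" using assms by (simp add: a_def)
  have Gamma_pos: "Gamma a > 0" "Gamma (1/2::real) > 0" "Gamma (a + 1/2) > 0"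
    using a by (auto intro!: Gamma_real_pos)
  define K where "K = x powr (a - 1) * x powr (-1/2) * exp (- x / 2) /
    (2 powr a * Gamma a * (2 powr (1/2) * Gamma (1/2)))"
  have "x - x * t = x * (1 - t)" by (simp add: algebra_simps)
  then have "chi2_density 1 (x - x * t) =
      x powr (-1/2) * (1 - t) powr (-1/2) * exp (- (x * (1 - t)) / 2) / (2 powr (1/2) * Gamma (1/2))"
    using assms by (simp only: chi2_density_def) (simp add: powr_mult)
  moreover have "chi2_density k (x * t) =
      x powr (a - 1) * t powr (a - 1) * exp (- (x * t) / 2) / (2 powr a * Gamma a)"
    using assms by (simp add: chi2_density_def powr_mult a_def)
  ultimately have "chi2_density k (x * t) * chi2_density 1 (x - x * t) =
      K * (t powr (a - 1) * (1 - t) powr (1/2 - 1))"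
    unfolding K_def by (simp add: exp_add[symmetric] field_simps)
  moreover have "x * K * Beta a (1/2) = chi2_density (Suc k) x"
  proof -
    have "real (Suc k) / 2 = a + 1/2" by (simp add: a_def field_simps)
    moreover have "x * x powr (a - 1) * x powr (-1/2) = x powr (a + 1/2 - 1)"
      using assms by (simp add: powr_add[symmetric] powr_mult_base)
    moreover have "2 powr a * 2 powr (1/2) = (2::real) powr (a + 1/2)"
      by (simp add: powr_add)
    ultimately show ?thesis
      using \<open>x > 0\<close> Gamma_pos
      by (simp add: chi2_density_def K_def Beta_def Gamma_one_half_real field_simps)
  qed
  moreover have "Beta a (1/2) > 0"
    using Gamma_pos by (simp add: Beta_def)
  ultimately show ?thesis
    using assms unfolding a_def[symmetric] by (simp add: field_simps)
qed

text \<open>After the substitution \<open>s = x t\<close> the convolution integral is a Beta integral.\<close>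

lemma chi2_density_convolution:
  assumes "k \<ge> 1"
  shows "(\<integral>\<^sup>+s. ennreal (chi2_density k s) * ennreal (chi2_density 1 (x - s)) \<partial>lborel)
       = ennreal (chi2_density (Suc k) x)"
proof (cases "x > 0")
  case False
  then have integrand: "ennreal (chi2_density k s) * ennreal (chi2_density 1 (x - s)) = 0" for s
    by (cases "s > 0") (auto simp: chi2_density_def)
  have "chi2_density (Suc k) x = 0"
    using False by (simp add: chi2_density_def)
  then show ?thesis by (simp only: integrand) simp
next
  case True
  define B where "B = Beta (real k / 2) (1/2)"
  have B: "B > 0"
    using assms by (simp add: B_def Beta_def Gamma_real_pos)
  define C where "C = chi2_density (Suc k) x / (x * B)"
  have C: "C \<ge> 0" using True B by (simp add: C_def)
  have integrand: "ennreal (chi2_density k (x * t)) * ennreal (chi2_density 1 (x - x * t)) =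
      ennreal C * (ennreal (t powr (real k / 2 - 1) * (1 - t) powr (1/2 - 1)) * indicator {0<..<1} t)" for t
  proof (cases "0 < t \<and> t < 1")
    case True
    then show ?thesis
      using chi2_density_mult_scaled[OF assms \<open>x > 0\<close>, of t] C
      by (simp add: C_def B_def ennreal_mult'[symmetric] mult.assoc)
  next
    case False
    then have "\<not> (0 < x * t \<and> 0 < x - x * t)"
      using \<open>x > 0\<close> by (auto simp: zero_less_mult_iff algebra_simps)
    then show ?thesis
      using False by (auto simp: chi2_density_def)
  qed
  have "(\<integral>\<^sup>+s. ennreal (chi2_density k s) * ennreal (chi2_density 1 (x - s)) \<partial>lborel) =
      ennreal x * (\<integral>\<^sup>+t. ennreal (chi2_density k (x * t)) * ennreal (chi2_density 1 (x - x * t)) \<partial>lborel)"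
    using True
    nn_integral_real_affine[of "\<lambda>s. ennreal (chi2_density k s) * ennreal (chi2_density 1 (x - s))" x 0]
    by simp
  also have "\<dots> = ennreal x * (ennreal C * ennreal B)"
    using assms nn_integral_Beta[of "real k / 2" "1/2"]
    by (simp only: integrand) (simp add: nn_integral_cmult B_def)
  also have "\<dots> = ennreal (chi2_density (Suc k) x)"
    using True B C by (simp add: C_def ennreal_mult'[symmetric])
  finally show ?thesis .
qed

section \<open>The square of a standard normal variable\<close>

abbreviation normal_distr :: "real \<Rightarrow> real \<Rightarrow> real measure" where
  "normal_distr \<nu> \<sigma> \<equiv> density lborel (\<lambda>x. ennreal (normal_density \<nu> \<sigma> x))"

abbreviation std_normal :: "real measure" where
  "std_normal \<equiv> normal_distr 0 1"

lemma prob_space_std_normal: "prob_space std_normal"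
  by (rule prob_space_normal_density) simp

lemma emeasure_density_lborel_singleton:
  fixes f :: "real \<Rightarrow> ennreal"
  assumes [measurable]: "f \<in> borel_measurable borel"
  shows "emeasure (density lborel f) {x} = 0"
proof -
  have "emeasure (density lborel f) {x} = (\<integral>\<^sup>+y. f y * indicator {x} y \<partial>lborel)"
    by (subst emeasure_density) auto
  also have "\<dots> = (\<integral>\<^sup>+(y::real). 0 \<partial>lborel)"
    by (intro nn_integral_cong_AE) (use AE_lborel_singleton[of x] in \<open>auto elim!: eventually_mono\<close>)
  finally show ?thesis by simp
qed

lemma emeasure_chi2_1_atMost:
  assumes "t > 0"
  shows "emeasure (chi2_distr 1) {..t} =
    (\<integral>\<^sup>+w. ennreal (2 * std_normal_density w) * indicator {0<..sqrt t} w \<partial>lborel)"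
proof -
  have "emeasure (chi2_distr 1) {..t} = (\<integral>\<^sup>+y. ennreal (chi2_density 1 y * indicator {0..t} y) \<partial>lborel)"
    unfolding chi2_distr_def
    by (subst emeasure_density) (auto intro!: nn_integral_cong simp: chi2_density_def indicator_def)
  also have "\<dots> = (\<integral>\<^sup>+w. ennreal (chi2_density 1 (w\<^sup>2) * (2 * w) * indicator {0..sqrt t} w) \<partial>lborel)"
  proof -
    have "(\<integral>\<^sup>+y. ennreal (chi2_density 1 y * indicator {(\<lambda>w. w\<^sup>2) 0..(\<lambda>w. w\<^sup>2) (sqrt t)} y) \<partial>lborel) =
        (\<integral>\<^sup>+w. ennreal (chi2_density 1 ((\<lambda>w. w\<^sup>2) w) * (\<lambda>w. 2 * w) w * indicator {0..sqrt t} w) \<partial>lborel)"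
    proof (rule nn_integral_substitution)
      show "set_borel_measurable borel {(\<lambda>w. w\<^sup>2) 0..(\<lambda>w. w\<^sup>2) (sqrt t)} (chi2_density 1)"
        unfolding set_borel_measurable_def by measurable
    qed (use assms in \<open>auto intro!: derivative_eq_intros continuous_intros\<close>)
    then show ?thesis using assms by simp
  qed
  also have "\<dots> = (\<integral>\<^sup>+w. ennreal (2 * std_normal_density w) * indicator {0<..sqrt t} w \<partial>lborel)"
  proof (intro nn_integral_cong)
    fix w :: real
    have "chi2_density 1 (w\<^sup>2) * (2 * w) = 2 * std_normal_density w" if "w > 0"
    proof -
      have "w\<^sup>2 = w powr 2"
        using that by (simp add: powr_realpow)
      then have "(w\<^sup>2) powr (1/2 - 1) = 1 / w"
        using that by (simp add: powr_powr powr_minus_divide)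
      moreover have "2 powr (1/2) * sqrt pi = sqrt (2 * pi)"
        by (simp add: powr_half_sqrt real_sqrt_mult)
      ultimately show ?thesis
        using that
        by (simp add: chi2_density_def std_normal_density_def Gamma_one_half_real field_simps)
    qed
    then show "ennreal (chi2_density 1 (w\<^sup>2) * (2 * w) * indicator {0..sqrt t} w) =
        ennreal (2 * std_normal_density w) * indicator {0<..sqrt t} w"
      by (cases "w > 0") (auto simp: indicator_def chi2_density_def)
  qed
  finally show ?thesis .
qed

lemma emeasure_std_normal_square_atMost:
  assumes "t > 0"
  shows "emeasure (distr std_normal borel (\<lambda>w. w\<^sup>2)) {..t} =
    (\<integral>\<^sup>+w. ennreal (2 * std_normal_density w) * indicator {0<..sqrt t} w \<partial>lborel)"
proof -
  define s where "s = sqrt t"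
  define f where "f w = ennreal (std_normal_density w) * indicator {0<..s} w" for w
  have "emeasure (distr std_normal borel (\<lambda>w. w\<^sup>2)) {..t} =
      (\<integral>\<^sup>+w. ennreal (std_normal_density w) * indicator {w. w\<^sup>2 \<le> t} w \<partial>lborel)"
    by (subst emeasure_distr) (auto simp: emeasure_density vimage_def Int_def)
  also have "\<dots> = (\<integral>\<^sup>+w. f w + f (- w) + ennreal (std_normal_density w) * indicator {0} w \<partial>lborel)"
  proof (intro nn_integral_cong)
    fix w :: real
    have "w\<^sup>2 \<le> t \<longleftrightarrow> \<bar>w\<bar> \<le> s"
      unfolding s_def using assms by (metis real_le_rsqrt real_sqrt_abs real_sqrt_le_iff abs_ge_zero sqrt_le_D)
    then show "ennreal (std_normal_density w) * indicator {w. w\<^sup>2 \<le> t} w =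
        f w + f (- w) + ennreal (std_normal_density w) * indicator {0} w"
      unfolding f_def using assms
      by (cases "w > 0"; cases "w = 0") (auto simp: indicator_def std_normal_density_def s_def)
  qed
  also have "\<dots> = (\<integral>\<^sup>+w. f w \<partial>lborel) + (\<integral>\<^sup>+w. f (- w) \<partial>lborel)"
    using emeasure_density_lborel_singleton[of "\<lambda>w. ennreal (std_normal_density w)" 0]
    by (simp add: nn_integral_add f_def emeasure_density)
  also have "(\<integral>\<^sup>+w. f (- w) \<partial>lborel) = (\<integral>\<^sup>+w. f w \<partial>lborel)"
  proof -
    have [measurable]: "f \<in> borel_measurable borel" unfolding f_def by measurable
    show ?thesis using nn_integral_real_affine[of f "-1" 0] by simp
  qed
  finally show ?thesis
    by (simp add: f_def s_def ennreal_mult nn_integral_cmult mult.assoc flip: mult_2)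
qed

lemma distr_std_normal_square: "distr std_normal borel (\<lambda>w. w\<^sup>2) = chi2_distr 1"
proof (rule cdf_unique')
  interpret prob_space std_normal by (rule prob_space_std_normal)
  interpret square: prob_space "distr std_normal borel (\<lambda>w. w\<^sup>2)"
    by (rule prob_space_distr) simp
  interpret chi2: prob_space "chi2_distr 1" by (rule prob_space_chi2_distr) simp
  show "finite_borel_measure (distr std_normal borel (\<lambda>w. w\<^sup>2))"
    unfolding finite_borel_measure_def finite_borel_measure_axioms_def
    by (rule conjI[OF square.finite_measure_axioms]) simp
  show "finite_borel_measure (chi2_distr 1)"
    unfolding finite_borel_measure_def finite_borel_measure_axioms_def
    by (rule conjI[OF chi2.finite_measure_axioms]) simp
  have "emeasure (distr std_normal borel (\<lambda>w. w\<^sup>2)) {..t} = emeasure (chi2_distr 1) {..t}" for t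
  proof (cases "t > 0")
    case True
    then show ?thesis
      using emeasure_chi2_1_atMost[OF True] emeasure_std_normal_square_atMost[OF True] by simp
  next
    case False
    have "(\<lambda>w. w\<^sup>2) -` {..t} \<subseteq> {0}"
      using False by (auto simp: not_less) (metis order.trans power2_less_eq_zero_iff)
    then have "emeasure (distr std_normal borel (\<lambda>w. w\<^sup>2)) {..t} \<le> emeasure std_normal {0}"
      by (subst emeasure_distr) (auto intro!: emeasure_mono)
    then have "emeasure (distr std_normal borel (\<lambda>w. w\<^sup>2)) {..t} = 0"
      using emeasure_density_lborel_singleton[of "\<lambda>w. ennreal (std_normal_density w)" 0] by simp
    moreover have "emeasure (chi2_distr 1) {..t} = 0"
      using False unfolding chi2_distr_def
      by (subst emeasure_density) (auto intro!: nn_integral_zero' simp: chi2_density_def indicator_def)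
    ultimately show ?thesis by simp
  qed
  then show "cdf (distr std_normal borel (\<lambda>w. w\<^sup>2)) = cdf (chi2_distr 1)"
    by (simp add: cdf_def measure_def)
qed

lemma nn_integral_std_normal_square:
  assumes [measurable]: "g \<in> borel_measurable borel"
  shows "(\<integral>\<^sup>+w. ennreal (std_normal_density w) * g (w\<^sup>2) \<partial>lborel) =
    (\<integral>\<^sup>+y. ennreal (chi2_density 1 y) * g y \<partial>lborel)"
proof -
  have "(\<integral>\<^sup>+w. ennreal (std_normal_density w) * g (w\<^sup>2) \<partial>lborel) =
      (\<integral>\<^sup>+y. g y \<partial>distr std_normal borel (\<lambda>w. w\<^sup>2))"
    by (simp add: nn_integral_density nn_integral_distr)
  also have "\<dots> = (\<integral>\<^sup>+y. ennreal (chi2_density 1 y) * g y \<partial>lborel)"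
    by (simp add: distr_std_normal_square chi2_distr_def nn_integral_density)
  finally show ?thesis .
qed

section \<open>Decorrelating the sample mean and a new sample\<close>

lemma normal_density_mult_decorrelate:
  fixes m \<sigma> \<nu> u v :: real
  assumes m: "m > 0" and \<sigma>: "\<sigma> > 0"
  shows "normal_density \<nu> (\<sigma> / sqrt m) (u - v / (m + 1)) * normal_density \<nu> \<sigma> (u + m * v / (m + 1))
       = normal_density \<nu> (\<sigma> / sqrt (m + 1)) u * normal_density 0 (\<sigma> * sqrt ((m + 1) / m)) v"
proof -
  have sq: "(\<sigma> / sqrt m)\<^sup>2 = \<sigma>\<^sup>2 / m" "(\<sigma> / sqrt (m + 1))\<^sup>2 = \<sigma>\<^sup>2 / (m + 1)"
    "(\<sigma> * sqrt ((m + 1) / m))\<^sup>2 = \<sigma>\<^sup>2 * (m + 1) / m"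
    using m by (simp_all add: power_divide power_mult_distrib)
  define d w where "d = u - \<nu>" and "w = v / (m + 1)"
  have v: "v = (m + 1) * w" using m by (simp add: w_def)
  have "- (u - v / (m + 1) - \<nu>)\<^sup>2 / (2 * (\<sigma>\<^sup>2 / m)) + - (u + m * v / (m + 1) - \<nu>)\<^sup>2 / (2 * \<sigma>\<^sup>2)
      = - (m * (d - w)\<^sup>2 + (d + m * w)\<^sup>2) / (2 * \<sigma>\<^sup>2)"
    using m \<sigma> by (simp add: d_def w_def field_simps)
  also have "m * (d - w)\<^sup>2 + (d + m * w)\<^sup>2 = (m + 1) * d\<^sup>2 + m * (m + 1) * w\<^sup>2"
    by (simp add: power2_eq_square algebra_simps)
  also have "- ((m + 1) * d\<^sup>2 + m * (m + 1) * w\<^sup>2) / (2 * \<sigma>\<^sup>2)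
      = - (u - \<nu>)\<^sup>2 / (2 * (\<sigma>\<^sup>2 / (m + 1))) + - (v - 0)\<^sup>2 / (2 * (\<sigma>\<^sup>2 * (m + 1) / m))"
  proof -
    have "(v - 0)\<^sup>2 / (2 * (\<sigma>\<^sup>2 * (m + 1) / m)) = m * (m + 1) * w\<^sup>2 / (2 * \<sigma>\<^sup>2)"
      using m unfolding v by (simp add: power_mult_distrib power2_eq_square)
    moreover have "(u - \<nu>)\<^sup>2 / (2 * (\<sigma>\<^sup>2 / (m + 1))) = (m + 1) * d\<^sup>2 / (2 * \<sigma>\<^sup>2)"
      using m \<sigma> by (simp add: d_def)
    ultimately show ?thesis by (simp add: d_def diff_divide_distrib)
  qed
  finally have exponent: "- (u - v / (m + 1) - \<nu>)\<^sup>2 / (2 * (\<sigma>\<^sup>2 / m)) + - (u + m * v / (m + 1) - \<nu>)\<^sup>2 / (2 * \<sigma>\<^sup>2)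
      = - (u - \<nu>)\<^sup>2 / (2 * (\<sigma>\<^sup>2 / (m + 1))) + - (v - 0)\<^sup>2 / (2 * (\<sigma>\<^sup>2 * (m + 1) / m))" .
  have "(2 * pi * (\<sigma>\<^sup>2 / m)) * (2 * pi * \<sigma>\<^sup>2) = (2 * pi * (\<sigma>\<^sup>2 / (m + 1))) * (2 * pi * (\<sigma>\<^sup>2 * (m + 1) / m))"
  proof -
    have "m + m * m > 0" using m by (simp add: add_pos_pos)
    then show ?thesis using m by (simp add: field_simps)
  qed
  then have prefactor: "1 / sqrt (2 * pi * (\<sigma>\<^sup>2 / m)) * (1 / sqrt (2 * pi * \<sigma>\<^sup>2))
      = 1 / sqrt (2 * pi * (\<sigma>\<^sup>2 / (m + 1))) * (1 / sqrt (2 * pi * (\<sigma>\<^sup>2 * (m + 1) / m)))"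
    by (simp add: real_sqrt_mult[symmetric])
  show ?thesis
    unfolding normal_density_def sq using prefactor exponent
    by (smt (verit) exp_add mult.assoc mult.commute)
qed

lemma nn_integral_normal_density_rescale:
  assumes s: "s > 0" and [measurable]: "f \<in> borel_measurable borel"
  shows "(\<integral>\<^sup>+v. ennreal (normal_density 0 s v) * f (v / s) \<partial>lborel) =
    (\<integral>\<^sup>+w. ennreal (std_normal_density w) * f w \<partial>lborel)"
proof -
  have "(\<integral>\<^sup>+v. ennreal (normal_density 0 s v) * f (v / s) \<partial>lborel) =
      (\<integral>\<^sup>+w. ennreal s * (ennreal (normal_density 0 s (0 + s * w)) * f ((0 + s * w) / s)) \<partial>lborel)"
    using s by (subst nn_integral_real_affine[where c = s and t = 0]) (auto simp: nn_integral_cmult)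
  also have "\<dots> = (\<integral>\<^sup>+w. ennreal (std_normal_density w) * f w \<partial>lborel)"
  proof (intro nn_integral_cong)
    fix w :: real
    have "s * normal_density 0 s (s * w) = std_normal_density w"
      using s by (simp add: normal_density_def real_sqrt_mult power_mult_distrib field_simps)
    then show "ennreal s * (ennreal (normal_density 0 s (0 + s * w)) * f ((0 + s * w) / s)) =
        ennreal (std_normal_density w) * f w"
      using s by (simp add: ennreal_mult'[symmetric] mult.assoc[symmetric])
  qed
  finally show ?thesis .
qed

lemma nn_integral_lborel_shear:
  fixes F :: "real \<Rightarrow> real \<Rightarrow> ennreal" and c :: real
  assumes [measurable]: "case_prod F \<in> borel_measurable (borel \<Otimes>\<^sub>M borel)"
  shows "(\<integral>\<^sup>+a. (\<integral>\<^sup>+b. F a b \<partial>lborel) \<partial>lborel) =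
    (\<integral>\<^sup>+v. (\<integral>\<^sup>+u. F (u - c * v) (u - c * v + v) \<partial>lborel) \<partial>lborel)"
proof -
  have "(\<integral>\<^sup>+a. (\<integral>\<^sup>+b. F a b \<partial>lborel) \<partial>lborel) = (\<integral>\<^sup>+a. (\<integral>\<^sup>+v. F a (a + v) \<partial>lborel) \<partial>lborel)"
  proof (rule nn_integral_cong)
    fix a :: real
    show "(\<integral>\<^sup>+b. F a b \<partial>lborel) = (\<integral>\<^sup>+v. F a (a + v) \<partial>lborel)"
      using nn_integral_real_affine[of "F a" 1 a] by simp
  qed
  also have "\<dots> = (\<integral>\<^sup>+v. (\<integral>\<^sup>+a. F a (a + v) \<partial>lborel) \<partial>lborel)"
    by (rule lborel_pair.Fubini'[symmetric]) measurable
  also have "\<dots> = (\<integral>\<^sup>+v. (\<integral>\<^sup>+u. F (u - c * v) (u - c * v + v) \<partial>lborel) \<partial>lborel)"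
  proof (rule nn_integral_cong)
    fix v :: real
    show "(\<integral>\<^sup>+a. F a (a + v) \<partial>lborel) = (\<integral>\<^sup>+u. F (u - c * v) (u - c * v + v) \<partial>lborel)"
      using nn_integral_real_affine[of "\<lambda>a. F a (a + v)" 1 "- c * v"] by simp
  qed
  finally show ?thesis .
qed

lemma nn_integral_normal_decorrelate:
  fixes h :: "real \<Rightarrow> real \<Rightarrow> ennreal" and m \<sigma> \<nu> :: real
  assumes m: "m > 0" and \<sigma>: "\<sigma> > 0"
    and [measurable]: "case_prod h \<in> borel_measurable (borel \<Otimes>\<^sub>M borel)"
  shows "(\<integral>\<^sup>+a. ennreal (normal_density \<nu> (\<sigma> / sqrt m) a) *
            (\<integral>\<^sup>+b. ennreal (normal_density \<nu> \<sigma> b) *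
               h ((m * a + b) / (m + 1)) ((b - a) * (sqrt (m / (m + 1)) / \<sigma>)) \<partial>lborel) \<partial>lborel)
       = (\<integral>\<^sup>+u. ennreal (normal_density \<nu> (\<sigma> / sqrt (m + 1)) u) *
            (\<integral>\<^sup>+w. ennreal (std_normal_density w) * h u w \<partial>lborel) \<partial>lborel)"
proof -
  define s where "s = \<sigma> * sqrt ((m + 1) / m)"
  have s: "s > 0" using m \<sigma> by (simp add: s_def)
  have scale: "v * (sqrt (m / (m + 1)) / \<sigma>) = v / s" for v
    using m \<sigma> by (simp add: s_def real_sqrt_divide field_simps)
  let ?A = "\<lambda>a. ennreal (normal_density \<nu> (\<sigma> / sqrt m) a)"
  let ?B = "\<lambda>b. ennreal (normal_density \<nu> \<sigma> b)"
  let ?U = "\<lambda>u. ennreal (normal_density \<nu> (\<sigma> / sqrt (m + 1)) u)"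
  let ?V = "\<lambda>v. ennreal (normal_density 0 s v)"
  let ?F = "\<lambda>a b. ?A a * ?B b * h ((m * a + b) / (m + 1)) ((b - a) / s)"
  have integrand: "?F (u - 1 / (m + 1) * v) (u - 1 / (m + 1) * v + v) = ?U u * ?V v * h u (v / s)" for u v
  proof -
    have "m * (u - w) + (u - w + (m + 1) * w) = (m + 1) * u" for w
      by (simp add: algebra_simps)
    then have "m * (u - v / (m + 1)) + (u - v / (m + 1) + v) = (m + 1) * u"
      using m by (metis add_pos_pos less_numeral_extra(1) nonzero_mult_div_cancel_left
          order_less_irrefl times_divide_eq_right)
    then have mean: "(m * (u - v / (m + 1)) + (u - v / (m + 1) + v)) / (m + 1) = u"
      using m by simp
    have diff: "u - v / (m + 1) + v - (u - v / (m + 1)) = v"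
      by simp
    have shift: "u - v / (m + 1) + v = u + m * v / (m + 1)"
      using m by (simp add: field_simps)
    have scaled: "1 / (m + 1) * v = v / (m + 1)"
      by simp
    show ?thesis
      unfolding scaled mean diff unfolding shift
      using normal_density_mult_decorrelate[OF m \<sigma>, of \<nu> u v]
      by (simp add: ennreal_mult'[symmetric] s_def mult_ac)
  qed
  have "(\<integral>\<^sup>+a. ?A a * (\<integral>\<^sup>+b. ?B b * h ((m * a + b) / (m + 1)) ((b - a) * (sqrt (m / (m + 1)) / \<sigma>)) \<partial>lborel) \<partial>lborel)
      = (\<integral>\<^sup>+a. (\<integral>\<^sup>+b. ?F a b \<partial>lborel) \<partial>lborel)"
    unfolding scale by (simp add: nn_integral_cmult[symmetric] mult.assoc)
  also have "\<dots> = (\<integral>\<^sup>+v. (\<integral>\<^sup>+u. ?F (u - 1 / (m + 1) * v) (u - 1 / (m + 1) * v + v) \<partial>lborel) \<partial>lborel)"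
    by (rule nn_integral_lborel_shear) measurable
  also have "\<dots> = (\<integral>\<^sup>+u. ?U u * (\<integral>\<^sup>+v. ?V v * h u (v / s) \<partial>lborel) \<partial>lborel)"
    unfolding integrand
    by (subst lborel_pair.Fubini', measurable)
      (auto intro!: nn_integral_cong simp: nn_integral_cmult[symmetric] mult.assoc)
  also have "\<dots> = (\<integral>\<^sup>+u. ?U u * (\<integral>\<^sup>+w. ennreal (std_normal_density w) * h u w \<partial>lborel) \<partial>lborel)"
    using s by (simp add: nn_integral_normal_density_rescale)
  finally show ?thesis .
qed

section \<open>The law of the sum of squared deviations\<close>

text \<open>For \<open>k = 0\<close> this is evaluation at \<open>0\<close>: \<open>\<chi>\<^sup>2(0)\<close> is taken to be the point mass at \<open>0\<close>,
  the law of an empty sum of squares.\<close>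

definition chi2_nn_integral :: "nat \<Rightarrow> (real \<Rightarrow> ennreal) \<Rightarrow> ennreal" where
  "chi2_nn_integral k g =
    (if k = 0 then g 0 else \<integral>\<^sup>+t. ennreal (chi2_density k t) * g t \<partial>lborel)"

lemma chi2_nn_integral_cmult:
  assumes [measurable]: "g \<in> borel_measurable borel"
  shows "chi2_nn_integral k (\<lambda>s. c * g s) = c * chi2_nn_integral k g"
  unfolding chi2_nn_integral_def
  by (auto simp: nn_integral_cmult[symmetric] mult_ac intro!: nn_integral_cong)

lemma chi2_nn_integral_Fubini:
  assumes [measurable]: "case_prod F \<in> borel_measurable (borel \<Otimes>\<^sub>M borel)"
  shows "chi2_nn_integral k (\<lambda>s. \<integral>\<^sup>+a. F a s \<partial>lborel) = (\<integral>\<^sup>+a. chi2_nn_integral k (F a) \<partial>lborel)"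
proof (cases "k = 0")
  case False
  have "chi2_nn_integral k (\<lambda>s. \<integral>\<^sup>+a. F a s \<partial>lborel) =
      (\<integral>\<^sup>+s. (\<integral>\<^sup>+a. ennreal (chi2_density k s) * F a s \<partial>lborel) \<partial>lborel)"
    using False unfolding chi2_nn_integral_def
    by (auto intro!: nn_integral_cong simp: nn_integral_cmult[symmetric])
  also have "\<dots> = (\<integral>\<^sup>+a. (\<integral>\<^sup>+s. ennreal (chi2_density k s) * F a s \<partial>lborel) \<partial>lborel)"
    by (rule lborel_pair.Fubini') measurable
  finally show ?thesis
    using False unfolding chi2_nn_integral_def by simp
qed (simp add: chi2_nn_integral_def)

lemma chi2_nn_integral_add_std_normal_square:
  assumes [measurable]: "g \<in> borel_measurable borel"
  shows "chi2_nn_integral k (\<lambda>s. \<integral>\<^sup>+w. ennreal (std_normal_density w) * g (s + w\<^sup>2) \<partial>lborel) =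
    chi2_nn_integral (Suc k) g"
proof (cases "k = 0")
  case True
  then show ?thesis
    using nn_integral_std_normal_square[of g] by (simp add: chi2_nn_integral_def)
next
  case False
  have "chi2_nn_integral k (\<lambda>s. \<integral>\<^sup>+w. ennreal (std_normal_density w) * g (s + w\<^sup>2) \<partial>lborel)
      = (\<integral>\<^sup>+s. (\<integral>\<^sup>+x. ennreal (chi2_density k s) * ennreal (chi2_density 1 (x - s)) * g x \<partial>lborel) \<partial>lborel)"
  proof -
    have "(\<integral>\<^sup>+w. ennreal (std_normal_density w) * g (s + w\<^sup>2) \<partial>lborel) =
        (\<integral>\<^sup>+y. ennreal (chi2_density 1 y) * g (s + y) \<partial>lborel)" for s
      by (rule nn_integral_std_normal_square) simp
    also have "(\<integral>\<^sup>+y. ennreal (chi2_density 1 y) * g (s + y) \<partial>lborel) =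
        (\<integral>\<^sup>+x. ennreal (chi2_density 1 (x - s)) * g x \<partial>lborel)" for s
      by (subst nn_integral_real_affine[where c = 1 and t = "- s"]) auto
    finally have "(\<integral>\<^sup>+w. ennreal (std_normal_density w) * g (s + w\<^sup>2) \<partial>lborel) =
        (\<integral>\<^sup>+x. ennreal (chi2_density 1 (x - s)) * g x \<partial>lborel)" for s .
    then show ?thesis
      using False unfolding chi2_nn_integral_def
      by (auto intro!: nn_integral_cong simp: nn_integral_cmult[symmetric] mult.assoc)
  qed
  also have "\<dots> = (\<integral>\<^sup>+x. (\<integral>\<^sup>+s. ennreal (chi2_density k s) * ennreal (chi2_density 1 (x - s)) * g x \<partial>lborel) \<partial>lborel)"
    by (rule lborel_pair.Fubini') measurable
  also have "\<dots> = chi2_nn_integral (Suc k) g"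
    using False chi2_density_convolution[of k]
    by (simp add: chi2_nn_integral_def nn_integral_multc)
  finally show ?thesis .
qed

definition sample_mean :: "nat \<Rightarrow> (nat \<Rightarrow> real) \<Rightarrow> real" where
  "sample_mean n x = (\<Sum>j=1..n. x j) / real n"

definition sum_sq_dev :: "nat \<Rightarrow> (nat \<Rightarrow> real) \<Rightarrow> real" where
  "sum_sq_dev n x = (\<Sum>k=1..n. (x k - sample_mean n x)\<^sup>2)"

lemma sum_sq_dev_eq:
  assumes "n \<ge> 1"
  shows "sum_sq_dev n x = (\<Sum>j=1..n. (x j)\<^sup>2) - (\<Sum>j=1..n. x j)\<^sup>2 / real n"
proof -
  define m where "m = sample_mean n x"
  define A where "A = (\<Sum>j=1..n. x j)"
  have Am: "A = real n * m" using assms by (simp add: m_def sample_mean_def A_def)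
  have "sum_sq_dev n x = (\<Sum>k=1..n. (x k)\<^sup>2 - 2 * m * x k + m\<^sup>2)"
    unfolding sum_sq_dev_def m_def[symmetric] by (intro sum.cong) (auto simp: power2_diff)
  also have "\<dots> = (\<Sum>k=1..n. (x k)\<^sup>2) - 2 * m * A + real n * m\<^sup>2"
    by (simp add: sum.distrib sum_subtractf sum_distrib_left A_def)
  also have "\<dots> = (\<Sum>k=1..n. (x k)\<^sup>2) - A\<^sup>2 / real n"
    using assms unfolding Am by (simp add: power2_eq_square field_simps)
  finally show ?thesis unfolding A_def .
qed

lemma sum_sq_dev_cong:
  assumes "\<And>i. i \<in> {1..n} \<Longrightarrow> x i = y i"
  shows "sum_sq_dev n x = sum_sq_dev n y"
proof -
  have "sample_mean n x = sample_mean n y"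
    unfolding sample_mean_def using assms by (metis sum.cong)
  then show ?thesis
    unfolding sum_sq_dev_def using assms by (intro sum.cong) auto
qed

lemma sum_fun_upd_Suc: "(\<Sum>j=1..Suc n. f ((x(Suc n := b)) j)) = (\<Sum>j=1..n. f (x j)) + f b"
proof -
  have "(\<Sum>j=1..n. f ((x(Suc n := b)) j)) = (\<Sum>j=1..n. f (x j))"
    by (intro sum.cong) auto
  then show ?thesis by simp
qed

lemma sample_mean_Suc:
  assumes "n \<ge> 1"
  shows "sample_mean (Suc n) (x(Suc n := b)) = (real n * sample_mean n x + b) / (real n + 1)"
  using assms sum_fun_upd_Suc[of "\<lambda>y. y" x n b] by (simp add: sample_mean_def add_ac)

lemma welford_update_identity:
  fixes A Q y n :: real
  assumes "n > 0"
  shows "(Q + y\<^sup>2) - (A + y)\<^sup>2 / (n + 1) = (Q - A\<^sup>2 / n) + n / (n + 1) * (y - A / n)\<^sup>2"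
proof -
  have n1: "n + 1 > 0" using assms by auto
  have n2: "n + n * n > 0" "n * n + n * (n * n) > 0" using assms by (simp_all add: add_pos_pos)
  have e: "n / (n + 1) * (y - A / n)\<^sup>2 = (n * y - A)\<^sup>2 / (n * (n + 1))"
  proof -
    have "y - A / n = (n * y - A) / n" using assms by (simp add: field_simps)
    then show ?thesis using assms n1 n2 by (simp add: power_divide power2_eq_square field_simps)
  qed
  have l: "(Q + y\<^sup>2) - (A + y)\<^sup>2 / (n + 1) = (n * (n + 1) * Q + n * (n + 1) * y\<^sup>2 - n * (A + y)\<^sup>2) / (n * (n + 1))"
    using assms n1 n2 by (simp add: field_simps)
  have r: "(Q - A\<^sup>2 / n) + (n * y - A)\<^sup>2 / (n * (n + 1)) = (n * (n + 1) * Q - (n + 1) * A\<^sup>2 + (n * y - A)\<^sup>2) / (n * (n + 1))"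
    using assms n1 n2 by (simp add: field_simps)
  have "n * (n + 1) * Q + n * (n + 1) * y\<^sup>2 - n * (A + y)\<^sup>2 = n * (n + 1) * Q - (n + 1) * A\<^sup>2 + (n * y - A)\<^sup>2"
    by (simp add: power2_eq_square algebra_simps)
  then show ?thesis unfolding e l r by simp
qed

lemma sum_sq_dev_Suc:
  assumes "n \<ge> 1"
  shows "sum_sq_dev (Suc n) (x(Suc n := b)) =
    sum_sq_dev n x + real n / (real n + 1) * (b - sample_mean n x)\<^sup>2"
proof -
  define Q A where "Q = (\<Sum>j=1..n. (x j)\<^sup>2)" and "A = (\<Sum>j=1..n. x j)"
  have n: "real n > 0" using assms by simp
  have "sum_sq_dev (Suc n) (x(Suc n := b)) = (Q + b\<^sup>2) - (A + b)\<^sup>2 / (real n + 1)"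
    using sum_fun_upd_Suc[of "\<lambda>y. y" x n b] sum_fun_upd_Suc[of "\<lambda>y. y\<^sup>2" x n b]
    by (subst sum_sq_dev_eq) (simp_all add: Q_def A_def add_ac)
  also have "\<dots> = (Q - A\<^sup>2 / real n) + real n / (real n + 1) * (b - A / real n)\<^sup>2"
    using n by (rule welford_update_identity)
  also have "\<dots> = sum_sq_dev n x + real n / (real n + 1) * (b - sample_mean n x)\<^sup>2"
    using assms by (simp add: sum_sq_dev_eq sample_mean_def Q_def A_def)
  finally show ?thesis .
qed

lemma product_sigma_finite_normal_distr: "\<sigma> > 0 \<Longrightarrow> product_sigma_finite (\<lambda>_. normal_distr \<nu> \<sigma>)"
  unfolding product_sigma_finite_def
  using prob_space_normal_density[of \<sigma> \<nu>] prob_space_imp_sigma_finite by blast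

lemma measurable_component_normal_distr:
  "j \<in> I \<Longrightarrow> (\<lambda>x. x j) \<in> borel_measurable (PiM I (\<lambda>_. normal_distr \<nu> \<sigma>))"
  using measurable_component_singleton[of j I "\<lambda>_. normal_distr \<nu> \<sigma>"]
  by (simp add: measurable_cong_sets[OF refl sets_density])

lemma borel_measurable_sample_mean [measurable]:
  "sample_mean n \<in> borel_measurable (PiM {1..n} (\<lambda>_. normal_distr \<nu> \<sigma>))"
  unfolding sample_mean_def[abs_def]
  by (intro borel_measurable_divide borel_measurable_sum measurable_component_normal_distr) auto

lemma borel_measurable_sum_sq_dev [measurable]:
  "sum_sq_dev n \<in> borel_measurable (PiM {1..n} (\<lambda>_. normal_distr \<nu> \<sigma>))"
  unfolding sum_sq_dev_def[abs_def]
  by (intro borel_measurable_power borel_measurable_diff borel_measurable_sum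
      measurable_component_normal_distr borel_measurable_sample_mean) auto

lemma nn_integral_normal_sample_Suc:
  fixes H :: "real \<Rightarrow> real \<Rightarrow> ennreal"
  assumes \<sigma>: "\<sigma> > 0" and n: "n \<ge> 1"
    and [measurable]: "case_prod H \<in> borel_measurable (borel \<Otimes>\<^sub>M borel)"
  defines "c \<equiv> sqrt (real n / (real n + 1)) / \<sigma>"
  shows "(\<integral>\<^sup>+x. H (sample_mean (Suc n) x) (sum_sq_dev (Suc n) x / \<sigma>\<^sup>2)
            \<partial>PiM {1..Suc n} (\<lambda>_. normal_distr \<nu> \<sigma>)) =
    (\<integral>\<^sup>+x. (\<integral>\<^sup>+b. ennreal (normal_density \<nu> \<sigma> b) *
        H ((real n * sample_mean n x + b) / (real n + 1))
          (sum_sq_dev n x / \<sigma>\<^sup>2 + ((b - sample_mean n x) * c)\<^sup>2) \<partial>lborel)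
      \<partial>PiM {1..n} (\<lambda>_. normal_distr \<nu> \<sigma>))"
proof -
  interpret P: product_sigma_finite "\<lambda>_. normal_distr \<nu> \<sigma>"
    using \<sigma> by (rule product_sigma_finite_normal_distr)
  have insert: "insert (Suc n) {1..n} = {1..Suc n}" by auto
  have "(\<integral>\<^sup>+x. H (sample_mean (Suc n) x) (sum_sq_dev (Suc n) x / \<sigma>\<^sup>2)
            \<partial>PiM {1..Suc n} (\<lambda>_. normal_distr \<nu> \<sigma>)) =
      (\<integral>\<^sup>+x. (\<integral>\<^sup>+b. H (sample_mean (Suc n) (x(Suc n := b))) (sum_sq_dev (Suc n) (x(Suc n := b)) / \<sigma>\<^sup>2)
          \<partial>normal_distr \<nu> \<sigma>) \<partial>PiM {1..n} (\<lambda>_. normal_distr \<nu> \<sigma>))"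
  proof -
    have meas: "(\<lambda>x. H (sample_mean (Suc n) x) (sum_sq_dev (Suc n) x / \<sigma>\<^sup>2))
        \<in> borel_measurable (PiM {1..Suc n} (\<lambda>_. normal_distr \<nu> \<sigma>))"
      by measurable
    show ?thesis
      unfolding insert[symmetric]
      by (rule P.product_nn_integral_insert)
        (auto simp only: meas[folded insert] finite_atLeastAtMost atLeastAtMost_iff)
  qed
  also have "\<dots> = (\<integral>\<^sup>+x. (\<integral>\<^sup>+b. ennreal (normal_density \<nu> \<sigma> b) *
        H ((real n * sample_mean n x + b) / (real n + 1))
          (sum_sq_dev n x / \<sigma>\<^sup>2 + ((b - sample_mean n x) * c)\<^sup>2) \<partial>lborel)
      \<partial>PiM {1..n} (\<lambda>_. normal_distr \<nu> \<sigma>))"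
  proof (rule nn_integral_cong)
    fix x :: "nat \<Rightarrow> real"
    have "sum_sq_dev (Suc n) (x(Suc n := b)) / \<sigma>\<^sup>2 =
        sum_sq_dev n x / \<sigma>\<^sup>2 + ((b - sample_mean n x) * c)\<^sup>2" for b
      using \<sigma> unfolding sum_sq_dev_Suc[OF n] c_def
      by (simp add: power_mult_distrib power_divide add_divide_distrib mult.commute)
    then show "(\<integral>\<^sup>+b. H (sample_mean (Suc n) (x(Suc n := b))) (sum_sq_dev (Suc n) (x(Suc n := b)) / \<sigma>\<^sup>2)
          \<partial>normal_distr \<nu> \<sigma>) =
        (\<integral>\<^sup>+b. ennreal (normal_density \<nu> \<sigma> b) *
          H ((real n * sample_mean n x + b) / (real n + 1))
            (sum_sq_dev n x / \<sigma>\<^sup>2 + ((b - sample_mean n x) * c)\<^sup>2) \<partial>lborel)"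
      by (simp add: sample_mean_Suc[OF n] nn_integral_density)
  qed
  finally show ?thesis .
qed

text \<open>In probabilistic terms: the sample mean and the scaled sum of squared deviations of \<open>n\<close>
  independent \<open>N(\<nu>, \<sigma>\<^sup>2)\<close> samples are independent, with laws \<open>N(\<nu>, \<sigma>\<^sup>2/n)\<close> and \<open>\<chi>\<^sup>2(n - 1)\<close>.\<close>

lemma nn_integral_normal_sample_mean_sum_sq_dev:
  fixes H :: "real \<Rightarrow> real \<Rightarrow> ennreal"
  assumes \<sigma>: "\<sigma> > 0" and "n \<ge> 1"
    and "case_prod H \<in> borel_measurable (borel \<Otimes>\<^sub>M borel)"
  shows "(\<integral>\<^sup>+x. H (sample_mean n x) (sum_sq_dev n x / \<sigma>\<^sup>2) \<partial>PiM {1..n} (\<lambda>_. normal_distr \<nu> \<sigma>)) =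
    (\<integral>\<^sup>+u. ennreal (normal_density \<nu> (\<sigma> / sqrt (real n)) u) * chi2_nn_integral (n - 1) (H u) \<partial>lborel)"
  using assms(2,3)
proof (induction n arbitrary: H rule: nat_induct_at_least)
  case base
  interpret product_sigma_finite "\<lambda>_. normal_distr \<nu> \<sigma>"
    using \<sigma> by (rule product_sigma_finite_normal_distr)
  have [measurable]: "case_prod H \<in> borel_measurable (borel \<Otimes>\<^sub>M borel)" by fact
  have "(\<integral>\<^sup>+x. H (sample_mean 1 x) (sum_sq_dev 1 x / \<sigma>\<^sup>2) \<partial>PiM {1..1} (\<lambda>_. normal_distr \<nu> \<sigma>)) =
      (\<integral>\<^sup>+x. H (x 1) 0 \<partial>PiM {1::nat} (\<lambda>_. normal_distr \<nu> \<sigma>))"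
    by (simp add: sample_mean_def sum_sq_dev_def)
  also have "\<dots> = (\<integral>\<^sup>+a. H a 0 \<partial>normal_distr \<nu> \<sigma>)"
    by (rule product_nn_integral_singleton) measurable
  finally show ?case
    by (simp add: chi2_nn_integral_def nn_integral_density)
next
  case (Suc n)
  have [measurable]: "case_prod H \<in> borel_measurable (borel \<Otimes>\<^sub>M borel)" by fact
  have n: "real n > 0" using Suc.hyps by simp
  let ?N = "\<lambda>n u. ennreal (normal_density \<nu> (\<sigma> / sqrt (real n)) u)"
  let ?H' = "\<lambda>u s. \<integral>\<^sup>+w. ennreal (std_normal_density w) * H u (s + w\<^sup>2) \<partial>lborel"
  define G where "G a s = (\<integral>\<^sup>+b. ennreal (normal_density \<nu> \<sigma> b) *
      H ((real n * a + b) / (real n + 1)) (s + ((b - a) * (sqrt (real n / (real n + 1)) / \<sigma>))\<^sup>2) \<partial>lborel)"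
    for a s
  have [measurable]: "case_prod G \<in> borel_measurable (borel \<Otimes>\<^sub>M borel)"
    unfolding G_def[abs_def] by measurable
  have "(\<integral>\<^sup>+x. H (sample_mean (Suc n) x) (sum_sq_dev (Suc n) x / \<sigma>\<^sup>2)
          \<partial>PiM {1..Suc n} (\<lambda>_. normal_distr \<nu> \<sigma>)) =
      (\<integral>\<^sup>+x. G (sample_mean n x) (sum_sq_dev n x / \<sigma>\<^sup>2) \<partial>PiM {1..n} (\<lambda>_. normal_distr \<nu> \<sigma>))"
    unfolding G_def using \<sigma> Suc.hyps by (rule nn_integral_normal_sample_Suc) measurable
  also have "\<dots> = (\<integral>\<^sup>+a. ?N n a * chi2_nn_integral (n - 1) (G a) \<partial>lborel)"
    by (rule Suc.IH) measurable
  also have "\<dots> = chi2_nn_integral (n - 1) (\<lambda>s. \<integral>\<^sup>+a. ?N n a * G a s \<partial>lborel)"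
    by (simp add: chi2_nn_integral_cmult chi2_nn_integral_Fubini)
  also have "\<dots> = chi2_nn_integral (n - 1) (\<lambda>s. \<integral>\<^sup>+u. ?N (Suc n) u * ?H' u s \<partial>lborel)"
    using nn_integral_normal_decorrelate[OF n \<sigma>, where h = "\<lambda>u w. H u (_ + w\<^sup>2)"]
    by (simp add: G_def add.commute)
  also have "\<dots> = (\<integral>\<^sup>+u. ?N (Suc n) u * chi2_nn_integral (n - 1) (?H' u) \<partial>lborel)"
    by (simp add: chi2_nn_integral_cmult chi2_nn_integral_Fubini)
  also have "\<dots> = (\<integral>\<^sup>+u. ?N (Suc n) u * chi2_nn_integral (Suc n - 1) (H u) \<partial>lborel)"
    using Suc.hyps by (simp add: chi2_nn_integral_add_std_normal_square)
  finally show ?case .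
qed

lemma (in prob_space) distr_indep_normal_eq_PiM:
  assumes "I \<noteq> {}" and indep: "indep_vars (\<lambda>_. borel) X I"
    and normal: "\<And>i. i \<in> I \<Longrightarrow> distributed M lborel (X i) (normal_density \<nu> \<sigma>)"
  shows "distr M (PiM I (\<lambda>_. normal_distr \<nu> \<sigma>)) (\<lambda>\<omega>. \<lambda>i\<in>I. X i \<omega>) = PiM I (\<lambda>_. normal_distr \<nu> \<sigma>)"
proof -
  have X: "random_variable borel (X i)" if "i \<in> I" for i
    using distributed_measurable[OF normal[OF that]]
    by (simp add: measurable_cong_sets[OF refl sets_lborel])
  have "distr M (PiM I (\<lambda>_. normal_distr \<nu> \<sigma>)) (\<lambda>\<omega>. \<lambda>i\<in>I. X i \<omega>) =
      distr M (PiM I (\<lambda>_. borel)) (\<lambda>\<omega>. \<lambda>i\<in>I. X i \<omega>)"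
    by (rule distr_cong) (auto intro!: sets_PiM_cong)
  also have "\<dots> = PiM I (\<lambda>i. distr M borel (X i))"
    using indep_vars_iff_distr_eq_PiM'[where I = I and M' = "\<lambda>_. borel" and X = X] assms(1) indep X by simp
  also have "\<dots> = PiM I (\<lambda>_. normal_distr \<nu> \<sigma>)"
  proof (rule PiM_cong)
    fix i assume "i \<in> I"
    have "distr M borel (X i) = distr M lborel (X i)" by (rule distr_cong) auto
    also have "\<dots> = normal_distr \<nu> \<sigma>" by (rule distributed_distr_eq_density[OF normal[OF \<open>i \<in> I\<close>]])
    finally show "distr M borel (X i) = normal_distr \<nu> \<sigma>" .
  qed simp
  finally show ?thesis .
qed

lemma (in prob_space) prob_sum_sq_dev_normal:
  assumes n: "n \<ge> 2" and \<sigma>: "\<sigma> > 0"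
    and indep: "indep_vars (\<lambda>_. borel) X {1..n}"
    and normal: "\<And>i. i \<in> {1..n} \<Longrightarrow> distributed M lborel (X i) (normal_density \<nu> \<sigma>)"
    and [measurable]: "B \<in> sets borel"
  shows "prob {\<omega> \<in> space M. sum_sq_dev n (\<lambda>i. X i \<omega>) / \<sigma>\<^sup>2 \<in> B} = measure (chi2_distr (n - 1)) B"
proof -
  let ?P = "PiM {1..n} (\<lambda>_. normal_distr \<nu> \<sigma>)"
  let ?X = "\<lambda>\<omega>. \<lambda>i\<in>{1..n}. X i \<omega>"
  have X: "?X \<in> measurable M ?P"
    using distributed_measurable[OF normal]
    by (intro measurable_restrict) (simp add: measurable_cong_sets[OF refl sets_density])
  have S: "{x \<in> space ?P. sum_sq_dev n x / \<sigma>\<^sup>2 \<in> B} \<in> sets ?P" by measurable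
  have "{\<omega> \<in> space M. sum_sq_dev n (\<lambda>i. X i \<omega>) / \<sigma>\<^sup>2 \<in> B} =
      ?X -` {x \<in> space ?P. sum_sq_dev n x / \<sigma>\<^sup>2 \<in> B} \<inter> space M"
  proof -
    have "sum_sq_dev n (?X \<omega>) = sum_sq_dev n (\<lambda>i. X i \<omega>)" for \<omega>
      by (rule sum_sq_dev_cong) simp
    then show ?thesis using measurable_space[OF X] by auto
  qed
  then have "emeasure M {\<omega> \<in> space M. sum_sq_dev n (\<lambda>i. X i \<omega>) / \<sigma>\<^sup>2 \<in> B} =
      emeasure (distr M ?P ?X) {x \<in> space ?P. sum_sq_dev n x / \<sigma>\<^sup>2 \<in> B}"
    by (simp only: emeasure_distr[OF X S])
  also have "\<dots> = emeasure ?P {x \<in> space ?P. sum_sq_dev n x / \<sigma>\<^sup>2 \<in> B}"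
    using n indep normal by (subst distr_indep_normal_eq_PiM) auto
  also have "\<dots> = (\<integral>\<^sup>+x. indicator B (sum_sq_dev n x / \<sigma>\<^sup>2) \<partial>?P)"
    by (subst nn_integral_indicator[symmetric, OF S]) (auto intro!: nn_integral_cong simp: indicator_def)
  also have "\<dots> = (\<integral>\<^sup>+u. ennreal (normal_density \<nu> (\<sigma> / sqrt (real n)) u) *
      chi2_nn_integral (n - 1) (indicator B) \<partial>lborel)"
    using \<sigma> n
    by (subst nn_integral_normal_sample_mean_sum_sq_dev[where H = "\<lambda>_. indicator B"]) simp_all
  also have "\<dots> = chi2_nn_integral (n - 1) (indicator B)"
    using \<sigma> n prob_space.emeasure_space_1[OF prob_space_normal_density, of "\<sigma> / sqrt (real n)" \<nu>]
    by (simp add: nn_integral_multc emeasure_density)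
  also have "\<dots> = emeasure (chi2_distr (n - 1)) B"
    using n by (simp add: chi2_nn_integral_def chi2_distr_def emeasure_density)
  finally show ?thesis
    by (simp add: measure_def)
qed

section \<open>Quantiles\<close>

lemma continuous_increasing_level_unique:
  fixes F :: "real \<Rightarrow> real"
  assumes cont: "\<And>x. isCont F x" and lim: "(F \<longlongrightarrow> 1) at_top" and b: "F b < p" and p: "p < 1"
    and strict: "\<And>x y. b \<le> x \<Longrightarrow> x < y \<Longrightarrow> F x < F y"
    and mono: "\<And>x. x \<le> b \<Longrightarrow> F x \<le> F b"
  shows "\<exists>x>b. F x = p \<and> (\<forall>y. F y = p \<longrightarrow> y = x)"
proof -
  have "eventually (\<lambda>x. p < F x) at_top"
    using order_tendstoD(1)[OF lim p] .
  then obtain N where N: "\<And>x. x \<ge> N \<Longrightarrow> p < F x"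
    by (auto simp: eventually_at_top_linorder)
  define X where "X = max N b"
  have X: "p < F X" "b \<le> X" using N by (auto simp: X_def)
  obtain x where x: "x \<ge> b" "x \<le> X" "F x = p"
    using IVT[of F b p X] X b cont by force
  have xb: "x > b" using x b by (cases "x = b") auto
  have uniq: "y = x" if "F y = p" for y
  proof (rule ccontr)
    assume ne: "y \<noteq> x"
    show False
    proof (cases "y \<le> b")
      case True then show False using mono[OF True] b that by simp
    next
      case False
      then show False using ne strict[of y x] strict[of x y] xb that x(3)
        by (cases "y < x") auto
    qed
  qed
  show ?thesis using xb x(3) uniq by blast
qed

lemma emeasure_density_Ioc_pos:
  fixes f :: "real \<Rightarrow> real"
  assumes [measurable]: "f \<in> borel_measurable borel"
    and pos: "\<And>t. t \<in> {x<..y} \<Longrightarrow> f t > 0" and "x < y"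
  shows "emeasure (density lborel (\<lambda>t. ennreal (f t))) {x<..y} > 0"
proof (rule ccontr)
  assume "\<not> ?thesis"
  then have "(\<integral>\<^sup>+t. ennreal (f t) * indicator {x<..y} t \<partial>lborel) = 0"
    by (simp add: emeasure_density zero_less_iff_neq_zero)
  then have "AE t in lborel. ennreal (f t) * indicator {x<..y} t = 0"
    by (simp add: nn_integral_0_iff_AE)
  then have "AE t in lborel. t \<notin> {x<..y}"
  proof (rule eventually_mono)
    fix t assume "ennreal (f t) * indicator {x<..y} t = 0"
    then show "t \<notin> {x<..y}" using pos[of t] by (auto simp: indicator_def)
  qed
  then have "emeasure lborel {x<..y} = 0"
    by (subst (asm) AE_iff_measurable[where N = "{x<..y}"]) auto
  then show False using \<open>x < y\<close> by simp
qed

context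
  fixes k :: nat
  assumes k: "k \<ge> 1"
begin

lemma real_distribution_chi2_distr: "real_distribution (chi2_distr k)"
proof -
  interpret prob_space "chi2_distr k" using k by (rule prob_space_chi2_distr)
  show ?thesis by unfold_locales simp
qed

lemma isCont_cdf_chi2_distr: "isCont (cdf (chi2_distr k)) x"
proof -
  interpret real_distribution "chi2_distr k" by (rule real_distribution_chi2_distr)
  show ?thesis
    by (subst isCont_cdf) (simp add: measure_def chi2_distr_def emeasure_density_lborel_singleton)
qed

lemma cdf_chi2_distr_0: "cdf (chi2_distr k) 0 = 0"
proof -
  have "emeasure (chi2_distr k) {..0} = (\<integral>\<^sup>+y. ennreal (chi2_density k y) * indicator {..0} y \<partial>lborel)"
    unfolding chi2_distr_def by (subst emeasure_density) auto
  also have "\<dots> = 0"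
    by (intro nn_integral_zero') (auto simp: chi2_density_def indicator_def)
  finally show ?thesis by (simp add: cdf_def measure_def)
qed

lemma cdf_chi2_distr_strict_mono:
  assumes "0 \<le> x" "x < y"
  shows "cdf (chi2_distr k) x < cdf (chi2_distr k) y"
proof -
  interpret real_distribution "chi2_distr k" by (rule real_distribution_chi2_distr)
  have "emeasure (chi2_distr k) {x<..y} > 0"
    unfolding chi2_distr_def using assms k
    by (intro emeasure_density_Ioc_pos) (auto intro!: chi2_density_pos)
  then show ?thesis
    using cdf_diff_eq[OF assms(2)] by (simp add: emeasure_eq_measure)
qed

lemma chi2_quantile_cdf:
  assumes "0 < p" "p < 1"
  shows "chi2_quantile k p > 0" and "cdf (chi2_distr k) (chi2_quantile k p) = p"
proof -
  interpret real_distribution "chi2_distr k" by (rule real_distribution_chi2_distr)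
  have "\<exists>x>0. cdf (chi2_distr k) x = p \<and> (\<forall>y. cdf (chi2_distr k) y = p \<longrightarrow> y = x)"
  proof (rule continuous_increasing_level_unique)
    show "cdf (chi2_distr k) 0 < p" using cdf_chi2_distr_0 assms by simp
  qed (use assms isCont_cdf_chi2_distr cdf_chi2_distr_strict_mono
      cdf_lim_at_top_prob cdf_nondecreasing in auto)
  then have "\<exists>!x. x > 0 \<and> cdf (chi2_distr k) x = p" by blast
  from theI'[OF this] show "chi2_quantile k p > 0" "cdf (chi2_distr k) (chi2_quantile k p) = p"
    unfolding chi2_quantile_def by auto
qed

lemma measure_chi2_distr_quantile_intervals:
  assumes "0 < \<alpha>" "\<alpha> < 1"
  defines "q\<^sub>1 \<equiv> chi2_quantile k (\<alpha> / 2)" and "q\<^sub>2 \<equiv> chi2_quantile k (1 - \<alpha> / 2)"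
  shows "measure (chi2_distr k) {q\<^sub>1..q\<^sub>2} = 1 - \<alpha>"
    and "measure (chi2_distr k) {q\<^sub>1..} = 1 - \<alpha> / 2"
    and "measure (chi2_distr k) {..q\<^sub>2} = 1 - \<alpha> / 2"
proof -
  interpret real_distribution "chi2_distr k" by (rule real_distribution_chi2_distr)
  have q\<^sub>1: "cdf (chi2_distr k) q\<^sub>1 = \<alpha> / 2" and q\<^sub>2: "cdf (chi2_distr k) q\<^sub>2 = 1 - \<alpha> / 2"
    using chi2_quantile_cdf assms by auto
  have "q\<^sub>1 < q\<^sub>2"
    using cdf_nondecreasing[of q\<^sub>2 q\<^sub>1] q\<^sub>1 q\<^sub>2 assms by force
  have atom: "measure (chi2_distr k) {q\<^sub>1} = 0"
    using isCont_cdf_chi2_distr[of q\<^sub>1] by (simp add: isCont_cdf)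
  have "measure (chi2_distr k) {q\<^sub>1..q\<^sub>2} = measure (chi2_distr k) ({q\<^sub>1} \<union> {q\<^sub>1<..q\<^sub>2})"
    using \<open>q\<^sub>1 < q\<^sub>2\<close> by (intro arg_cong[where f = "measure (chi2_distr k)"]) auto
  also have "\<dots> = cdf (chi2_distr k) q\<^sub>2 - cdf (chi2_distr k) q\<^sub>1"
    using atom cdf_diff_eq[OF \<open>q\<^sub>1 < q\<^sub>2\<close>] by (subst finite_measure_Union) auto
  finally show "measure (chi2_distr k) {q\<^sub>1..q\<^sub>2} = 1 - \<alpha>"
    using q\<^sub>1 q\<^sub>2 by simp
  have "measure (chi2_distr k) {q\<^sub>1..} = measure (chi2_distr k) ({q\<^sub>1} \<union> (UNIV - {..q\<^sub>1}))"
    by (intro arg_cong[where f = "measure (chi2_distr k)"]) auto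
  also have "\<dots> = 1 - cdf (chi2_distr k) q\<^sub>1"
    using atom prob_compl[of "{..q\<^sub>1}"] by (subst finite_measure_Union) (auto simp: cdf_def)
  finally show "measure (chi2_distr k) {q\<^sub>1..} = 1 - \<alpha> / 2"
    using q\<^sub>1 by simp
  show "measure (chi2_distr k) {..q\<^sub>2} = 1 - \<alpha> / 2"
    using q\<^sub>2 by (simp add: cdf_def)
qed

end

lemma real_distribution_std_normal: "real_distribution std_normal"
proof -
  interpret prob_space std_normal by (rule prob_space_std_normal)
  show ?thesis by unfold_locales simp
qed

lemma cdf_std_normal_0: "cdf std_normal 0 = 1/2"
proof -
  interpret real_distribution std_normal by (rule real_distribution_std_normal)
  have "emeasure std_normal {..0} = (\<integral>\<^sup>+t. ennreal (std_normal_density t) * indicator {..0} t \<partial>lborel)"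
    by (subst emeasure_density) auto
  also have "\<dots> = (\<integral>\<^sup>+t. ennreal (std_normal_density (0 + (-1) * t)) * indicator {..0} (0 + (-1) * t) \<partial>lborel)"
    by (subst nn_integral_real_affine[where c = "-1" and t = 0]) auto
  also have "\<dots> = (\<integral>\<^sup>+t. ennreal (std_normal_density t) * indicator {0..} t \<partial>lborel)"
    by (intro nn_integral_cong) (auto simp: std_normal_density_def indicator_def)
  also have "\<dots> = emeasure std_normal ({0} \<union> {0<..})"
    by (subst emeasure_density) (auto intro!: nn_integral_cong simp: indicator_def)
  also have "\<dots> = emeasure std_normal {0<..}"
    by (subst plus_emeasure[symmetric]) (auto simp: emeasure_density_lborel_singleton)
  finally have sym: "emeasure std_normal {..0} = emeasure std_normal {0<..}" .
  have "emeasure std_normal {..0} + emeasure std_normal {0<..} = emeasure std_normal ({..0} \<union> {0<..})"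
    by (subst plus_emeasure) auto
  also have "{..0::real} \<union> {0<..} = space std_normal" by auto
  finally have "measure std_normal {..0} + measure std_normal {..0} = 1"
    using sym emeasure_space_1
    by (simp add: emeasure_eq_measure ennreal_plus[symmetric] del: ennreal_plus)
  then show ?thesis by (simp add: cdf_def)
qed

lemma std_normal_quantile_pos:
  assumes "1/2 < p" "p < 1"
  shows "std_normal_quantile p > 0"
proof -
  interpret real_distribution std_normal by (rule real_distribution_std_normal)
  have strict: "cdf std_normal x < cdf std_normal y" if "x < y" for x y
  proof -
    have "emeasure std_normal {x<..y} > 0"
      using that by (intro emeasure_density_Ioc_pos) (auto intro!: normal_density_pos)
    then show ?thesis
      using cdf_diff_eq[OF that] by (simp add: emeasure_eq_measure)
  qed
  have "\<exists>x>0. cdf std_normal x = p \<and> (\<forall>y. cdf std_normal y = p \<longrightarrow> y = x)"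
  proof (rule continuous_increasing_level_unique)
    show "cdf std_normal 0 < p" using cdf_std_normal_0 assms by simp
  qed (use assms strict cdf_lim_at_top_prob cdf_nondecreasing in
      \<open>auto simp: isCont_cdf measure_def emeasure_density_lborel_singleton\<close>)
  then obtain x where "x > 0" and x: "\<And>y. cdf std_normal y = p \<longleftrightarrow> y = x" by blast
  then have "std_normal_quantile p = x"
    unfolding std_normal_quantile_def by simp
  with \<open>x > 0\<close> show ?thesis by simp
qed

section \<open>The credible interval events\<close>

lemma le_sqrt_scaled_iff:
  fixes S c q \<sigma> :: real
  assumes "\<sigma> > 0" "c > 0" "q > 0" "S \<ge> 0"
  shows "\<sigma> \<le> sqrt (S / c) * sqrt (c / q) \<longleftrightarrow> q \<le> S / \<sigma>\<^sup>2"
    and "sqrt (S / c) * sqrt (c / q) \<le> \<sigma> \<longleftrightarrow> S / \<sigma>\<^sup>2 \<le> q"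
proof -
  have eq: "sqrt (S / c) * sqrt (c / q) = sqrt (S / q)"
    using assms by (simp add: real_sqrt_mult[symmetric])
  have "\<sigma> \<le> sqrt (S / q) \<longleftrightarrow> sqrt (\<sigma>\<^sup>2) \<le> sqrt (S / q)"
    using assms by simp
  also have "\<dots> \<longleftrightarrow> q \<le> S / \<sigma>\<^sup>2"
    using assms by (simp only: real_sqrt_le_iff) (simp add: field_simps)
  finally show "\<sigma> \<le> sqrt (S / c) * sqrt (c / q) \<longleftrightarrow> q \<le> S / \<sigma>\<^sup>2"
    unfolding eq .
  have "sqrt (S / q) \<le> \<sigma> \<longleftrightarrow> sqrt (S / q) \<le> sqrt (\<sigma>\<^sup>2)"
    using assms by simp
  also have "\<dots> \<longleftrightarrow> S / \<sigma>\<^sup>2 \<le> q"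
    using assms by (simp only: real_sqrt_le_iff) (simp add: field_simps)
  finally show "sqrt (S / c) * sqrt (c / q) \<le> \<sigma> \<longleftrightarrow> S / \<sigma>\<^sup>2 \<le> q"
    unfolding eq .
qed

lemma credible_interval_events:
  fixes a z \<sigma> S c q\<^sub>1 q\<^sub>2 :: real
  assumes z: "z > 0" and \<sigma>: "\<sigma> > 0" and c: "c > 0" and q: "q\<^sub>1 > 0" "q\<^sub>2 > 0" and S: "S \<ge> 0"
  defines "s \<equiv> sqrt (S / c)" and "L \<equiv> sqrt (c / q\<^sub>2)" and "R \<equiv> sqrt (c / q\<^sub>1)"
  shows "(a - z * \<sigma> \<in> {a - z * s * R .. a - z * s * L} \<and> a + z * \<sigma> \<in> {a + z * s * L .. a + z * s * R})
      \<longleftrightarrow> S / \<sigma>\<^sup>2 \<in> {q\<^sub>1..q\<^sub>2}"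
    and "{a - z * s * R .. a + z * s * R} \<supseteq> {a - z * \<sigma> .. a + z * \<sigma>} \<longleftrightarrow> S / \<sigma>\<^sup>2 \<in> {q\<^sub>1..}"
    and "{a - z * s * L .. a + z * s * L} \<subseteq> {a - z * \<sigma> .. a + z * \<sigma>} \<longleftrightarrow> S / \<sigma>\<^sup>2 \<in> {..q\<^sub>2}"
proof -
  have R: "\<sigma> \<le> s * R \<longleftrightarrow> q\<^sub>1 \<le> S / \<sigma>\<^sup>2" and L: "s * L \<le> \<sigma> \<longleftrightarrow> S / \<sigma>\<^sup>2 \<le> q\<^sub>2"
    unfolding s_def L_def R_def using le_sqrt_scaled_iff[OF \<sigma> c _ S] q by auto
  have "s * L \<ge> 0"
    unfolding s_def L_def using S c q by simp
  then show "(a - z * \<sigma> \<in> {a - z * s * R .. a - z * s * L} \<and> a + z * \<sigma> \<in> {a + z * s * L .. a + z * s * R})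
      \<longleftrightarrow> S / \<sigma>\<^sup>2 \<in> {q\<^sub>1..q\<^sub>2}"
    and "{a - z * s * R .. a + z * s * R} \<supseteq> {a - z * \<sigma> .. a + z * \<sigma>} \<longleftrightarrow> S / \<sigma>\<^sup>2 \<in> {q\<^sub>1..}"
    and "{a - z * s * L .. a + z * s * L} \<subseteq> {a - z * \<sigma> .. a + z * \<sigma>} \<longleftrightarrow> S / \<sigma>\<^sup>2 \<in> {..q\<^sub>2}"
    using z \<sigma> R L by (auto simp: atLeastatMost_subset_iff mult.assoc mult_le_cancel_left_pos)
qed

theorem mainTheorem2:
  fixes P :: "'a measure" and M :: nat and \<phi> :: "nat \<Rightarrow> 'a \<Rightarrow> real"
    and \<nu> \<sigma> \<alpha> \<gamma> \<phi>MAP :: real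
  assumes "prob_space P"
    and "M \<ge> 2"
    and "\<sigma> > 0"
    and "prob_space.indep_vars P (\<lambda>_. borel) \<phi> {1..M}"
    and "\<And>k. k \<in> {1..M} \<Longrightarrow> distributed P lborel (\<phi> k) (normal_density \<nu> \<sigma>)"
    and "0 < \<alpha>" "\<alpha> < 1" "0 < \<gamma>" "\<gamma> < 1"
  defines "shat \<equiv> \<lambda>\<omega>. sqrt ((\<Sum>k=1..M. (\<phi> k \<omega> - (\<Sum>j=1..M. \<phi> j \<omega>) / real M)^2) / (real M - 1))"
    and "z \<equiv> std_normal_quantile (1 - \<gamma> / 2)"
    and "L \<equiv> sqrt ((real M - 1) / chi2_quantile (M - 1) (1 - \<alpha> / 2))"
    and "R \<equiv> sqrt ((real M - 1) / chi2_quantile (M - 1) (\<alpha> / 2))"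
  shows "measure P {\<omega> \<in> space P.
             \<phi>MAP - z * \<sigma> \<in> {\<phi>MAP - z * shat \<omega> * R .. \<phi>MAP - z * shat \<omega> * L} \<and>
             \<phi>MAP + z * \<sigma> \<in> {\<phi>MAP + z * shat \<omega> * L .. \<phi>MAP + z * shat \<omega> * R}} = 1 - \<alpha> \<and>
         measure P {\<omega> \<in> space P.
             {\<phi>MAP - z * shat \<omega> * R .. \<phi>MAP + z * shat \<omega> * R} \<supseteq> {\<phi>MAP - z * \<sigma> .. \<phi>MAP + z * \<sigma>}} = 1 - \<alpha> / 2 \<and>
         measure P {\<omega> \<in> space P.
             {\<phi>MAP - z * shat \<omega> * L .. \<phi>MAP + z * shat \<omega> * L} \<subseteq> {\<phi>MAP - z * \<sigma> .. \<phi>MAP + z * \<sigma>}} = 1 - \<alpha> / 2"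
proof -
  have k: "M - 1 \<ge> 1" and M: "real M - 1 > 0" using \<open>M \<ge> 2\<close> by auto
  have q: "chi2_quantile (M - 1) (\<alpha> / 2) > 0" "chi2_quantile (M - 1) (1 - \<alpha> / 2) > 0"
    using chi2_quantile_cdf(1)[OF k] \<open>0 < \<alpha>\<close> \<open>\<alpha> < 1\<close> by auto
  have z: "z > 0"
    unfolding z_def using \<open>0 < \<gamma>\<close> \<open>\<gamma> < 1\<close> by (intro std_normal_quantile_pos) auto
  define S where "S \<omega> = sum_sq_dev M (\<lambda>i. \<phi> i \<omega>)" for \<omega>
  have S: "S \<omega> \<ge> 0" for \<omega>
    by (simp add: S_def sum_sq_dev_def sum_nonneg)
  have shat: "shat \<omega> = sqrt (S \<omega> / (real M - 1))" for \<omega>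
    by (simp add: shat_def S_def sum_sq_dev_def sample_mean_def)
  note events = credible_interval_events[OF z \<open>\<sigma> > 0\<close> M q S]
  note law = prob_space.prob_sum_sq_dev_normal[OF assms(1-5), folded S_def]
  show ?thesis
    unfolding shat L_def R_def events
    using law[of "{_.._}"] law[of "{_..}"] law[of "{.._}"]
      measure_chi2_distr_quantile_intervals[OF k \<open>0 < \<alpha>\<close> \<open>\<alpha> < 1\<close>]
    by simp
qed

end
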